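(* Let $m\in\mathbb N$, $q_1,\dots,q_m\in[1,\infty)$ and $\frac1q=\sum_{i=1}^m\frac1{q_i}$. Let $\omega_1,\dots,\omega_m$ be weights on $\mathbb R^n$ with $\omega_1^{q_1},\dots,\omega_m^{q_m}\in A_\infty$ and $u_{\vec\omega}^q=\prod_{i=1}^m\omega_i^q\in A_\infty$, where $u_{\vec\omega}=\prod_{i=1}^m\omega_i$. Then for every ball $B\subseteq\mathbb R^n$, $$\prod_{i=1}^m\|\omega_i\|_{L^{q_i}(B)}\approx\|u_{\vec\omega}\|_{L^q(B)},$$ with implicit constants independent of $B$.
   Context: A weight is a nonnegative locally integrable function on $\mathbb R^n$, positive a.e. For a ball $B$ and $s>0$, $\|w\|_{L^s(B)}=(\int_Bw^s)^{1/s}$. $A_\infty=\bigcup_{1\le p<\infty}A_p$ (Muckenhoupt classes). $X\approx Y$ means $C^{-1}Y\le X\le CY$ for a constant $C$. *)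

theory Defs
  imports "HOL-Analysis.Analysis"
begin

definition is_weight :: "('a::euclidean_space \<Rightarrow> real) \<Rightarrow> bool" where
  "is_weight w \<longleftrightarrow>
     w \<in> borel_measurable lebesgue \<and> (\<forall>y. 0 \<le> w y) \<and>
     (\<forall>x r. set_integrable lebesgue (ball x r) w) \<and>
     (AE y in lebesgue. 0 < w y)"

definition avg :: "'a::euclidean_space set \<Rightarrow> ('a \<Rightarrow> real) \<Rightarrow> real" where
  "avg B w = (set_lebesgue_integral lebesgue B w) / measure lebesgue B"

definition Muckenhoupt :: "real \<Rightarrow> ('a::euclidean_space \<Rightarrow> real) \<Rightarrow> bool" where
  "Muckenhoupt p w \<longleftrightarrow> is_weight w \<and>
     (if p = 1 then
        (\<exists>C. \<forall>x r. 0 < r \<longrightarrow>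
           (AE y in lebesgue. y \<in> ball x r \<longrightarrow> avg (ball x r) w \<le> C * w y))
      else
        (\<exists>C. \<forall>x r. 0 < r \<longrightarrow>
           set_integrable lebesgue (ball x r) (\<lambda>y. w y powr (-1 / (p - 1))) \<and>
           avg (ball x r) w * (avg (ball x r) (\<lambda>y. w y powr (-1 / (p - 1)))) powr (p - 1) \<le> C))"

definition A_infty :: "('a::euclidean_space \<Rightarrow> real) \<Rightarrow> bool" where
  "A_infty w \<longleftrightarrow> (\<exists>p. 1 \<le> p \<and> Muckenhoupt p w)"

definition Lnorm :: "real \<Rightarrow> 'a::euclidean_space set \<Rightarrow> ('a \<Rightarrow> real) \<Rightarrow> real" where
  "Lnorm s B w = (set_lebesgue_integral lebesgue B (\<lambda>y. w y powr s)) powr (1 / s)"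

end

theory Submission
  imports Defs
begin

(* Put v_i = \<omega>_i^q_i and \<theta>_i = q / q_i, so that \<Sum> \<theta>_i = 1 and u^q = \<Prod> v_i^\<theta>_i is a geometric
   mean. Integrating the weighted AM-GM inequality gives Hoelder's inequality
   avg_B u^q \<le> \<Prod> (avg_B v_i)^\<theta>_i. Conversely, every A_\<infinity> weight v satisfies the reverse Jensen
   inequality ln (avg_B v) \<le> K + avg_B (ln v) on all balls: for A_1 directly, for A_p by Jensen
   applied to v^(-1/(p-1)). Combined with Jensen's inequality exp (avg_B ln u^q) \<le> avg_B u^q this
   yields \<Prod> (avg_B v_i)^\<theta>_i \<le> e^(\<Sum> \<theta>_i K_i) avg_B u^q. Taking q-th roots gives both bounds. *)

lemma measure_pos_imp_fmeasurable:
  assumes "0 < measure M B"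
  shows "B \<in> fmeasurable M"
proof (rule fmeasurableI)
  show "B \<in> sets M" using assms measure_notin_sets by force
  show "emeasure M B < \<infinity>" using assms measure_zero_top by (force simp: less_top)
qed

lemma set_integrable_const:
  fixes c :: real
  assumes "B \<in> fmeasurable M"
  shows "set_integrable M B (\<lambda>_. c)"
  using assms unfolding set_integrable_def
  by (intro integrable_scaleR_left integrable_real_indicator) (auto simp: fmeasurable_def)

lemma set_integrable_sum:
  fixes f :: "'i \<Rightarrow> 'a \<Rightarrow> real"
  assumes "\<And>i. i \<in> I \<Longrightarrow> set_integrable M B (f i)"
  shows "set_integrable M B (\<lambda>y. \<Sum>i\<in>I. f i y)"
  using assms unfolding set_integrable_def by (simp add: sum_distrib_left)

lemma set_integral_sum:
  fixes f :: "'i \<Rightarrow> 'a \<Rightarrow> real"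
  assumes "\<And>i. i \<in> I \<Longrightarrow> set_integrable M B (f i)"
  shows "(LINT y:B|M. \<Sum>i\<in>I. f i y) = (\<Sum>i\<in>I. LINT y:B|M. f i y)"
  using assms unfolding set_integrable_def set_lebesgue_integral_def
  by (simp add: sum_distrib_left integral_sum)

lemma set_integrable_ln:
  fixes v g :: "'a \<Rightarrow> real"
  assumes [measurable]: "v \<in> borel_measurable M" "B \<in> sets M"
    and "set_integrable M B v" "set_integrable M B g"
    and "AE y\<in>B in M. 0 < v y \<and> - ln (v y) \<le> g y"
  shows "set_integrable M B (\<lambda>y. ln (v y))"
proof (rule set_integrable_bound)
  show "set_integrable M B (\<lambda>y. \<bar>v y\<bar> + \<bar>g y\<bar>)"
    using assms(3,4) by (intro set_integral_add set_integrable_abs)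
  show "set_borel_measurable M B (\<lambda>y. ln (v y))"
    unfolding set_borel_measurable_def by measurable
  show "AE y\<in>B in M. norm (ln (v y)) \<le> norm (\<bar>v y\<bar> + \<bar>g y\<bar>)"
    using assms(5) by eventually_elim (use ln_le_minus_one in force)
qed

lemma avg_const:
  assumes "0 < measure lebesgue B"
  shows "avg B (\<lambda>_. c) = c"
proof -
  have B: "B \<in> fmeasurable lebesgue" using measure_pos_imp_fmeasurable[OF assms] .
  show ?thesis
    using assms fmeasurableD[OF B] fmeasurableD2[OF B]
    by (simp add: avg_def set_integral_const infinity_ennreal_def)
qed

lemma avg_add:
  assumes "set_integrable lebesgue B f" "set_integrable lebesgue B g"
  shows "avg B (\<lambda>y. f y + g y) = avg B f + avg B g"
  using assms by (simp add: avg_def add_divide_distrib)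

lemma avg_mult_left: "avg B (\<lambda>y. c * f y) = c * avg B f"
  by (simp add: avg_def)

lemma avg_divide_right: "avg B (\<lambda>y. f y / c) = avg B f / c"
  by (simp add: avg_def)

lemma avg_sum:
  assumes "\<And>i. i \<in> I \<Longrightarrow> set_integrable lebesgue B (f i)"
  shows "avg B (\<lambda>y. \<Sum>i\<in>I. f i y) = (\<Sum>i\<in>I. avg B (f i))"
  using assms by (simp add: avg_def set_integral_sum sum_divide_distrib)

lemma avg_mono_AE:
  assumes "set_integrable lebesgue B f" "set_integrable lebesgue B g"
    and "AE y\<in>B in lebesgue. f y \<le> g y"
  shows "avg B f \<le> avg B g"
  unfolding avg_def using set_integral_mono_AE[OF assms] by (simp add: divide_right_mono)

lemma avg_pos:
  assumes B: "0 < measure lebesgue B" and f: "set_integrable lebesgue B f"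
    and pos: "AE y\<in>B in lebesgue. 0 < f y"
  shows "0 < avg B f"
proof -
  have B_sets: "B \<in> sets lebesgue" using fmeasurableD[OF measure_pos_imp_fmeasurable[OF B]] .
  have f_int: "integrable lebesgue (\<lambda>y. indicator B y * f y)"
    using f by (simp add: set_integrable_def)
  have nonneg: "AE y in lebesgue. 0 \<le> indicator B y * f y"
    using pos by eventually_elim (auto simp: indicator_def)
  have "(LINT y:B|lebesgue. f y) \<noteq> 0"
  proof
    assume "(LINT y:B|lebesgue. f y) = 0"
    then have "AE y in lebesgue. indicator B y * f y = 0"
      using integral_nonneg_eq_0_iff_AE[OF f_int nonneg] by (simp add: set_lebesgue_integral_def)
    with pos have "AE y in lebesgue. y \<notin> B"
      by eventually_elim (auto simp: indicator_def)
    then have "emeasure lebesgue B = 0"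
      using AE_iff_measurable[OF B_sets] by auto
    with B show False by (simp add: measure_def)
  qed
  moreover have "0 \<le> (LINT y:B|lebesgue. f y)"
    using nonneg by (simp add: set_lebesgue_integral_def integral_nonneg_AE)
  ultimately show ?thesis using B by (simp add: avg_def)
qed

lemma exp_avg_le_avg:
  assumes B: "0 < measure lebesgue B"
    and g: "set_integrable lebesgue B g" and h: "set_integrable lebesgue B h"
    and exp_le: "AE y\<in>B in lebesgue. exp (g y) \<le> h y"
  shows "exp (avg B g) \<le> avg B h"
proof -
  define c where "c = avg B g"
  have tangent: "exp c * (1 - c) + exp c * g y \<le> exp (g y)" for y
  proof -
    have "exp c * (1 - c) + exp c * g y = exp c * (1 + (g y - c))"
      by (simp add: algebra_simps)
    also have "\<dots> \<le> exp c * exp (g y - c)"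
      by (intro mult_left_mono exp_ge_add_one_self) auto
    finally show ?thesis by (simp add: exp_diff)
  qed
  have const: "set_integrable lebesgue B (\<lambda>_. exp c * (1 - c))"
    using measure_pos_imp_fmeasurable[OF B] by (rule set_integrable_const)
  have "avg B (\<lambda>y. exp c * (1 - c) + exp c * g y)
      = avg B (\<lambda>_. exp c * (1 - c)) + avg B (\<lambda>y. exp c * g y)"
    using const g by (intro avg_add) auto
  also have "\<dots> = exp c"
    by (simp only: avg_mult_left avg_const[OF B]) (simp add: c_def algebra_simps)
  finally have "exp c = avg B (\<lambda>y. exp c * (1 - c) + exp c * g y)" ..
  also have "\<dots> \<le> avg B h"
    using const g h exp_le
    by (intro avg_mono_AE) (auto elim!: eventually_mono intro: order_trans[OF tangent])
  finally show ?thesis unfolding c_def .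
qed

lemma prod_powr_eq_exp_sum:
  fixes x \<theta> :: "'i \<Rightarrow> real"
  assumes "finite I" "\<And>i. i \<in> I \<Longrightarrow> 0 < x i"
  shows "(\<Prod>i\<in>I. x i powr \<theta> i) = exp (\<Sum>i\<in>I. \<theta> i * ln (x i))"
proof -
  have "(\<Prod>i\<in>I. x i powr \<theta> i) = (\<Prod>i\<in>I. exp (\<theta> i * ln (x i)))"
    using assms(2) by (intro prod.cong) (fastforce simp: powr_def mult.commute)+
  also have "\<dots> = exp (\<Sum>i\<in>I. \<theta> i * ln (x i))"
    using assms(1) by (simp add: exp_sum)
  finally show ?thesis .
qed

lemma geom_mean_le_arith_mean_weighted:
  fixes x \<theta> :: "'i \<Rightarrow> real"
  assumes "finite I" "\<And>i. i \<in> I \<Longrightarrow> 0 \<le> \<theta> i" "(\<Sum>i\<in>I. \<theta> i) = 1"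
    and "\<And>i. i \<in> I \<Longrightarrow> 0 \<le> x i"
  shows "(\<Prod>i\<in>I. x i powr \<theta> i) \<le> (\<Sum>i\<in>I. \<theta> i * x i)"
proof (cases "\<exists>i\<in>I. x i = 0")
  case True
  then show ?thesis using assms by (simp add: prod_zero sum_nonneg)
next
  case False
  with assms(4) have pos: "\<And>i. i \<in> I \<Longrightarrow> 0 < x i" by force
  have "I \<noteq> {}" using assms(3) by auto
  have "(\<Prod>i\<in>I. x i powr \<theta> i) = exp (\<Sum>i\<in>I. \<theta> i * ln (x i))"
    using assms(1) pos by (rule prod_powr_eq_exp_sum)
  also have "\<dots> \<le> (\<Sum>i\<in>I. \<theta> i * exp (ln (x i)))"
    using convex_on_sum[OF assms(1) \<open>I \<noteq> {}\<close> exp_convex assms(3), of "\<lambda>i. ln (x i)"] assms(2)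
    by simp
  also have "\<dots> = (\<Sum>i\<in>I. \<theta> i * x i)"
    using pos by simp
  finally show ?thesis .
qed

lemma avg_geom_mean_le_prod_avg_powr:
  fixes v :: "'i \<Rightarrow> 'a::euclidean_space \<Rightarrow> real"
  assumes B: "0 < measure lebesgue B" and I: "finite I"
    and \<theta>: "\<And>i. i \<in> I \<Longrightarrow> 0 \<le> \<theta> i" "(\<Sum>i\<in>I. \<theta> i) = 1"
    and v_int: "\<And>i. i \<in> I \<Longrightarrow> set_integrable lebesgue B (v i)"
    and v_nonneg: "\<And>i y. i \<in> I \<Longrightarrow> 0 \<le> v i y"
    and avg_v_pos: "\<And>i. i \<in> I \<Longrightarrow> 0 < avg B (v i)"
    and G_int: "set_integrable lebesgue B (\<lambda>y. \<Prod>i\<in>I. v i y powr \<theta> i)"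
  shows "avg B (\<lambda>y. \<Prod>i\<in>I. v i y powr \<theta> i) \<le> (\<Prod>i\<in>I. avg B (v i) powr \<theta> i)"
proof -
  define a where "a i = avg B (v i)" for i
  define P where "P = (\<Prod>i\<in>I. a i powr \<theta> i)"
  have P: "0 < P" using avg_v_pos by (force simp: P_def a_def intro!: prod_pos)
  have am_gm: "(\<Prod>i\<in>I. v i y powr \<theta> i) / P \<le> (\<Sum>i\<in>I. \<theta> i * (v i y / a i))" for y
  proof -
    have "(\<Prod>i\<in>I. v i y powr \<theta> i) / P = (\<Prod>i\<in>I. (v i y / a i) powr \<theta> i)"
      by (simp add: P_def powr_divide prod_dividef)
    also have "\<dots> \<le> (\<Sum>i\<in>I. \<theta> i * (v i y / a i))"
      using I \<theta> v_nonneg avg_v_pos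
      by (intro geom_mean_le_arith_mean_weighted) (auto simp: a_def less_imp_le)
    finally show ?thesis .
  qed
  have "avg B (\<lambda>y. \<Prod>i\<in>I. v i y powr \<theta> i) / P = avg B (\<lambda>y. (\<Prod>i\<in>I. v i y powr \<theta> i) / P)"
    by (simp add: avg_def)
  also have "\<dots> \<le> avg B (\<lambda>y. \<Sum>i\<in>I. \<theta> i * (v i y / a i))"
    using G_int v_int am_gm
    by (intro avg_mono_AE set_integrable_sum) (auto simp: set_integrable_mult_right)
  also have "\<dots> = (\<Sum>i\<in>I. \<theta> i * (avg B (v i) / a i))"
    using v_int by (subst avg_sum) (auto simp: avg_mult_left avg_divide_right)
  also have "\<dots> = 1"
    using \<theta>(2) avg_v_pos by (simp add: a_def less_imp_neq[symmetric] cong: sum.cong)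
  finally show ?thesis using P by (simp add: P_def a_def)
qed

lemma prod_avg_powr_le_exp_avg_geom_mean:
  fixes v :: "'i \<Rightarrow> 'a::euclidean_space \<Rightarrow> real"
  assumes B: "0 < measure lebesgue B" and I: "finite I"
    and \<theta>: "\<And>i. i \<in> I \<Longrightarrow> 0 \<le> \<theta> i"
    and v_pos: "AE y\<in>B in lebesgue. \<forall>i\<in>I. 0 < v i y"
    and avg_v_pos: "\<And>i. i \<in> I \<Longrightarrow> 0 < avg B (v i)"
    and ln_v_int: "\<And>i. i \<in> I \<Longrightarrow> set_integrable lebesgue B (\<lambda>y. ln (v i y))"
    and reverse: "\<And>i. i \<in> I \<Longrightarrow> ln (avg B (v i)) \<le> K i + avg B (\<lambda>y. ln (v i y))"
    and G_int: "set_integrable lebesgue B (\<lambda>y. \<Prod>i\<in>I. v i y powr \<theta> i)"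
  shows "(\<Prod>i\<in>I. avg B (v i) powr \<theta> i)
           \<le> exp (\<Sum>i\<in>I. \<theta> i * K i) * avg B (\<lambda>y. \<Prod>i\<in>I. v i y powr \<theta> i)"
proof -
  define L where "L y = (\<Sum>i\<in>I. \<theta> i * ln (v i y))" for y
  have L_int: "set_integrable lebesgue B L"
    unfolding L_def using ln_v_int by (intro set_integrable_sum) auto
  have avg_L: "avg B L = (\<Sum>i\<in>I. \<theta> i * avg B (\<lambda>y. ln (v i y)))"
    unfolding L_def using ln_v_int by (subst avg_sum) (auto simp: avg_mult_left)
  have "(\<Prod>i\<in>I. avg B (v i) powr \<theta> i) = exp (\<Sum>i\<in>I. \<theta> i * ln (avg B (v i)))"
    using I avg_v_pos by (rule prod_powr_eq_exp_sum)
  also have "\<dots> \<le> exp (\<Sum>i\<in>I. \<theta> i * (K i + avg B (\<lambda>y. ln (v i y))))"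
    using \<theta> reverse by (simp add: sum_mono mult_left_mono)
  also have "\<dots> = exp (\<Sum>i\<in>I. \<theta> i * K i) * exp (avg B L)"
    by (simp add: avg_L distrib_left sum.distrib exp_add)
  also have "exp (avg B L) \<le> avg B (\<lambda>y. \<Prod>i\<in>I. v i y powr \<theta> i)"
    using B L_int G_int
  proof (rule exp_avg_le_avg)
    show "AE y\<in>B in lebesgue. exp (L y) \<le> (\<Prod>i\<in>I. v i y powr \<theta> i)"
      using v_pos by eventually_elim (simp add: L_def prod_powr_eq_exp_sum[OF I])
  qed
  finally show ?thesis by (simp add: mult_left_mono)
qed

definition reverse_Jensen_on_balls :: "real \<Rightarrow> ('a::euclidean_space \<Rightarrow> real) \<Rightarrow> bool" where
  "reverse_Jensen_on_balls K v \<longleftrightarrow>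
     (\<forall>x r. 0 < r \<longrightarrow> set_integrable lebesgue (ball x r) (\<lambda>y. ln (v y)) \<and>
        ln (avg (ball x r) v) \<le> K + avg (ball x r) (\<lambda>y. ln (v y)))"

lemma reverse_Jensen_of_A1_bound:
  fixes v :: "'a::euclidean_space \<Rightarrow> real"
  assumes B: "0 < measure lebesgue B" and [measurable]: "v \<in> borel_measurable lebesgue"
    and v_int: "set_integrable lebesgue B v" and v_pos: "AE y\<in>B in lebesgue. 0 < v y"
    and C: "0 < C" "AE y\<in>B in lebesgue. avg B v \<le> C * v y"
  shows "set_integrable lebesgue B (\<lambda>y. ln (v y)) \<and>
    ln (avg B v) \<le> ln C + avg B (\<lambda>y. ln (v y))"
proof -
  define a where "a = avg B v"
  have a: "0 < a" unfolding a_def using B v_int v_pos by (rule avg_pos)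
  have lower: "AE y\<in>B in lebesgue. 0 < v y \<and> ln a - ln C \<le> ln (v y)"
    using v_pos C(2)
  proof eventually_elim
    case (elim y)
    show ?case
    proof
      assume "y \<in> B"
      with elim have "0 < v y" "ln a \<le> ln (C * v y)" using a by (simp_all add: a_def)
      then show "0 < v y \<and> ln a - ln C \<le> ln (v y)" using C(1) by (simp add: ln_mult)
    qed
  qed
  have const: "set_integrable lebesgue B (\<lambda>_. c)" for c :: real
    using measure_pos_imp_fmeasurable[OF B] by (rule set_integrable_const)
  have B_sets: "B \<in> sets lebesgue" using fmeasurableD[OF measure_pos_imp_fmeasurable[OF B]] .
  have ln_int: "set_integrable lebesgue B (\<lambda>y. ln (v y))"
    using lower by (intro set_integrable_ln[OF _ B_sets v_int const[of "ln C - ln a"]]) auto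
  have "avg B (\<lambda>_. ln a - ln C) \<le> avg B (\<lambda>y. ln (v y))"
    using lower by (intro avg_mono_AE[OF const ln_int]) auto
  then show ?thesis using ln_int by (simp add: avg_const[OF B] a_def)
qed

lemma neg_ln_le_powr:
  fixes x p :: real
  assumes "0 < x" "1 < p"
  shows "- ln x \<le> (p - 1) * x powr (-1 / (p - 1))"
proof -
  have "- ln x = (p - 1) * ln (x powr (-1 / (p - 1)))" using assms by (simp add: ln_powr)
  also have "\<dots> \<le> (p - 1) * x powr (-1 / (p - 1))"
    using assms ln_le_minus_one[of "x powr (-1 / (p - 1))"] by (intro mult_left_mono) auto
  finally show ?thesis .
qed

lemma reverse_Jensen_of_Ap_bound:
  fixes v :: "'a::euclidean_space \<Rightarrow> real" and p :: real
  defines "w \<equiv> \<lambda>y. v y powr (-1 / (p - 1))"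
  assumes B: "0 < measure lebesgue B" and [measurable]: "v \<in> borel_measurable lebesgue"
    and v_int: "set_integrable lebesgue B v" and v_pos: "AE y\<in>B in lebesgue. 0 < v y"
    and p: "1 < p" and w_int: "set_integrable lebesgue B w"
    and C: "avg B v * avg B w powr (p - 1) \<le> C"
  shows "set_integrable lebesgue B (\<lambda>y. ln (v y)) \<and>
    ln (avg B v) \<le> ln C + avg B (\<lambda>y. ln (v y))"
proof -
  have B_sets: "B \<in> sets lebesgue" using fmeasurableD[OF measure_pos_imp_fmeasurable[OF B]] .
  have a: "0 < avg B v" using B v_int v_pos by (rule avg_pos)
  have "AE y\<in>B in lebesgue. 0 < v y \<and> - ln (v y) \<le> (p - 1) * w y"
    using v_pos by eventually_elim (use p neg_ln_le_powr in \<open>auto simp: w_def\<close>)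
  then have ln_int: "set_integrable lebesgue B (\<lambda>y. ln (v y))"
    using w_int by (intro set_integrable_ln[OF _ B_sets v_int]) auto
  define L where "L = avg B (\<lambda>y. ln (v y))"
  have "exp (avg B (\<lambda>y. -1 / (p - 1) * ln (v y))) \<le> avg B w"
  proof (rule exp_avg_le_avg[OF B _ w_int])
    show "set_integrable lebesgue B (\<lambda>y. -1 / (p - 1) * ln (v y))"
      using ln_int by (rule set_integrable_mult_right)
    show "AE y\<in>B in lebesgue. exp (-1 / (p - 1) * ln (v y)) \<le> w y"
      using v_pos by eventually_elim (auto simp: w_def powr_def)
  qed
  then have "exp (-1 / (p - 1) * L) \<le> avg B w" unfolding L_def avg_mult_left .
  then have b: "0 < avg B w" and "-1 / (p - 1) * L \<le> ln (avg B w)"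
    using exp_gt_zero order_less_le_trans ln_ge_iff by blast+
  then have "- L \<le> (p - 1) * ln (avg B w)"
    using p mult_left_mono[of "-1 / (p - 1) * L" "ln (avg B w)" "p - 1"] by simp
  moreover have "ln (avg B v * avg B w powr (p - 1)) \<le> ln C"
  proof -
    have "0 < avg B v * avg B w powr (p - 1)" using a b by simp
    with C show ?thesis by (metis ln_le_cancel_iff order_less_le_trans)
  qed
  ultimately show ?thesis
    using ln_int a b by (simp add: L_def ln_mult ln_powr)
qed

lemma Muckenhoupt_1_reverse_Jensen:
  assumes "Muckenhoupt 1 v"
  shows "\<exists>K. reverse_Jensen_on_balls K v"
proof -
  have [measurable]: "v \<in> borel_measurable lebesgue" and v_nonneg: "\<And>y. 0 \<le> v y"
    and v_int: "\<And>x r. set_integrable lebesgue (ball x r) v"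
    and v_pos: "AE y in lebesgue. 0 < v y"
    using assms by (auto simp: Muckenhoupt_def is_weight_def)
  obtain C where C: "\<And>x r. 0 < r \<Longrightarrow> AE y\<in>ball x r in lebesgue. avg (ball x r) v \<le> C * v y"
    using assms by (auto simp: Muckenhoupt_def)
  have "AE y\<in>ball x r in lebesgue. avg (ball x r) v \<le> max C 1 * v y" if "0 < r" for x r
    using C[OF that, of x]
    by eventually_elim (use v_nonneg in \<open>smt (verit) mult_right_mono max.cobounded1\<close>)
  then have "reverse_Jensen_on_balls (ln (max C 1)) v"
    unfolding reverse_Jensen_on_balls_def using v_int v_pos
    by (intro allI impI reverse_Jensen_of_A1_bound) auto
  then show ?thesis ..
qed

lemma Muckenhoupt_reverse_Jensen:
  assumes p: "1 < p" and "Muckenhoupt p v"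
  shows "\<exists>K. reverse_Jensen_on_balls K v"
proof -
  have [measurable]: "v \<in> borel_measurable lebesgue"
    and v_int: "\<And>x r. set_integrable lebesgue (ball x r) v"
    and v_pos: "AE y in lebesgue. 0 < v y"
    using assms by (auto simp: Muckenhoupt_def is_weight_def)
  obtain C where C: "\<And>x r. 0 < r \<Longrightarrow>
      set_integrable lebesgue (ball x r) (\<lambda>y. v y powr (-1 / (p - 1))) \<and>
      avg (ball x r) v * avg (ball x r) (\<lambda>y. v y powr (-1 / (p - 1))) powr (p - 1) \<le> C"
    using assms by (auto simp: Muckenhoupt_def)
  have "reverse_Jensen_on_balls (ln C) v"
    unfolding reverse_Jensen_on_balls_def using v_int v_pos p C
    by (intro allI impI reverse_Jensen_of_Ap_bound) auto
  then show ?thesis ..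
qed

lemma A_infty_reverse_Jensen:
  assumes "A_infty v"
  shows "\<exists>K. reverse_Jensen_on_balls K v"
proof -
  obtain p where "1 \<le> p" "Muckenhoupt p v" using assms by (auto simp: A_infty_def)
  then show ?thesis
    by (metis Muckenhoupt_1_reverse_Jensen Muckenhoupt_reverse_Jensen order_le_less)
qed

lemma A_infty_imp_weight: "A_infty v \<Longrightarrow> is_weight v"
  by (auto simp: A_infty_def Muckenhoupt_def)

lemma Lnorm_eq_avg:
  assumes "0 < measure lebesgue B"
  shows "Lnorm s B w = (measure lebesgue B * avg B (\<lambda>y. w y powr s)) powr (1 / s)"
  using assms by (simp add: Lnorm_def avg_def)

lemma prod_powr_reciprocal_exponents:
  fixes a q :: "'i \<Rightarrow> real"
  assumes "finite I" "0 < \<mu>" "\<And>i. i \<in> I \<Longrightarrow> 0 \<le> a i"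
    and "qq \<noteq> 0" "1 / qq = (\<Sum>i\<in>I. 1 / q i)"
  shows "(\<Prod>i\<in>I. (\<mu> * a i) powr (1 / q i)) = (\<mu> * (\<Prod>i\<in>I. a i powr (qq / q i))) powr (1 / qq)"
proof -
  have "(\<Prod>i\<in>I. (\<mu> * a i) powr (1 / q i)) = (\<Prod>i\<in>I. ((\<mu> * a i) powr (qq / q i)) powr (1 / qq))"
    using assms(4) by (simp add: powr_powr)
  also have "\<dots> = (\<Prod>i\<in>I. (\<mu> * a i) powr (qq / q i)) powr (1 / qq)"
    by (rule prod_powr_distrib[symmetric])
  also have "(\<Prod>i\<in>I. (\<mu> * a i) powr (qq / q i)) = \<mu> powr (\<Sum>i\<in>I. qq / q i) * (\<Prod>i\<in>I. a i powr (qq / q i))"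
    using assms(2,3) by (simp add: powr_mult prod.distrib powr_sum)
  also have "(\<Sum>i\<in>I. qq / q i) = qq * (1 / qq)"
    by (simp add: assms(5) sum_distrib_left)
  also have "\<dots> = 1" using assms(4) by simp
  finally show ?thesis using assms(2) by simp
qed

lemma powr_prod_eq_prod_powr_powr:
  fixes x q :: "'i \<Rightarrow> real"
  assumes "\<And>i. i \<in> I \<Longrightarrow> q i \<noteq> 0"
  shows "(\<Prod>i\<in>I. x i) powr s = (\<Prod>i\<in>I. (x i powr q i) powr (s / q i))"
  unfolding prod_powr_distrib powr_powr using assms by (intro prod.cong) simp_all

lemma prod_Lnorm_eq:
  assumes "0 < measure lebesgue B" "finite I" "\<And>i. i \<in> I \<Longrightarrow> 0 \<le> avg B (\<lambda>y. \<omega> i y powr q i)"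
    and "qq \<noteq> 0" "1 / qq = (\<Sum>i\<in>I. 1 / q i)"
  shows "(\<Prod>i\<in>I. Lnorm (q i) B (\<omega> i))
    = (measure lebesgue B * (\<Prod>i\<in>I. avg B (\<lambda>y. \<omega> i y powr q i) powr (qq / q i))) powr (1 / qq)"
  using assms prod_powr_reciprocal_exponents[OF assms(2,1,3-5)] by (simp add: Lnorm_eq_avg)

lemma Lnorm_prod_bounds:
  fixes B :: "'a::euclidean_space set" and \<omega> :: "'i \<Rightarrow> 'a \<Rightarrow> real"
  assumes B: "0 < measure lebesgue B" and I: "finite I"
    and q: "\<And>i. i \<in> I \<Longrightarrow> 0 < q i" and qq: "0 < qq" "1 / qq = (\<Sum>i\<in>I. 1 / q i)"
    and \<omega>_nonneg: "\<And>i y. i \<in> I \<Longrightarrow> 0 \<le> \<omega> i y"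
    and \<omega>_pos: "AE y\<in>B in lebesgue. \<forall>i\<in>I. 0 < \<omega> i y"
    and v_int: "\<And>i. i \<in> I \<Longrightarrow> set_integrable lebesgue B (\<lambda>y. \<omega> i y powr q i)"
    and u_int: "set_integrable lebesgue B (\<lambda>y. (\<Prod>i\<in>I. \<omega> i y) powr qq)"
    and reverse: "\<And>i. i \<in> I \<Longrightarrow> set_integrable lebesgue B (\<lambda>y. ln (\<omega> i y powr q i)) \<and>
        ln (avg B (\<lambda>y. \<omega> i y powr q i)) \<le> K i + avg B (\<lambda>y. ln (\<omega> i y powr q i))"
  shows "Lnorm qq B (\<lambda>y. \<Prod>i\<in>I. \<omega> i y) \<le> (\<Prod>i\<in>I. Lnorm (q i) B (\<omega> i))"
    and "(\<Prod>i\<in>I. Lnorm (q i) B (\<omega> i)) \<le> exp (\<Sum>i\<in>I. K i / q i) * Lnorm qq B (\<lambda>y. \<Prod>i\<in>I. \<omega> i y)"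
proof -
  define v where "v i = (\<lambda>y. \<omega> i y powr q i)" for i
  define \<theta> where "\<theta> i = qq / q i" for i
  define \<mu> where "\<mu> = measure lebesgue B"
  define G where "G = avg B (\<lambda>y. \<Prod>i\<in>I. v i y powr \<theta> i)"
  define P where "P = (\<Prod>i\<in>I. avg B (v i) powr \<theta> i)"
  have \<theta>_nonneg: "\<And>i. i \<in> I \<Longrightarrow> 0 \<le> \<theta> i" using q qq by (simp add: \<theta>_def less_imp_le)
  have "(\<Sum>i\<in>I. \<theta> i) = qq * (1 / qq)"
    by (simp add: \<theta>_def qq(2) sum_distrib_left)
  then have \<theta>_sum: "(\<Sum>i\<in>I. \<theta> i) = 1" using qq(1) by simp
  have geom: "(\<Prod>i\<in>I. \<omega> i y) powr qq = (\<Prod>i\<in>I. v i y powr \<theta> i)" for y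
    unfolding v_def \<theta>_def using q by (intro powr_prod_eq_prod_powr_powr) force
  have v_pos: "AE y\<in>B in lebesgue. \<forall>i\<in>I. 0 < v i y"
    using \<omega>_pos by eventually_elim (auto simp: v_def)
  have avg_v_pos: "0 < avg B (v i)" if "i \<in> I" for i
    using B v_int that v_pos by (intro avg_pos) (auto simp: v_def)
  have G_int: "set_integrable lebesgue B (\<lambda>y. \<Prod>i\<in>I. v i y powr \<theta> i)"
    using u_int by (simp add: geom)
  have G_pos: "0 < G"
    unfolding G_def using B G_int v_pos
    by (intro avg_pos) (auto elim!: eventually_mono intro!: prod_pos)
  have norm_prod: "(\<Prod>i\<in>I. Lnorm (q i) B (\<omega> i)) = (\<mu> * P) powr (1 / qq)"
    unfolding \<mu>_def P_def \<theta>_def v_def using B I avg_v_pos qq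
    by (intro prod_Lnorm_eq) (auto simp: v_def less_imp_le)
  have norm_u: "Lnorm qq B (\<lambda>y. \<Prod>i\<in>I. \<omega> i y) = (\<mu> * G) powr (1 / qq)"
    using B by (simp add: Lnorm_eq_avg \<mu>_def G_def geom)
  have "G \<le> P"
    unfolding G_def P_def using B I \<theta>_nonneg \<theta>_sum v_int \<omega>_nonneg avg_v_pos G_int
    by (intro avg_geom_mean_le_prod_avg_powr) (auto simp: v_def)
  then show "Lnorm qq B (\<lambda>y. \<Prod>i\<in>I. \<omega> i y) \<le> (\<Prod>i\<in>I. Lnorm (q i) B (\<omega> i))"
    unfolding norm_prod norm_u using B G_pos qq(1) by (intro powr_mono2) (auto simp: \<mu>_def)
  have "P \<le> exp (\<Sum>i\<in>I. \<theta> i * K i) * G"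
    unfolding G_def P_def using B I \<theta>_nonneg v_pos avg_v_pos reverse G_int
    by (intro prod_avg_powr_le_exp_avg_geom_mean) (auto simp: v_def)
  then have "(\<mu> * P) powr (1 / qq) \<le> (exp (\<Sum>i\<in>I. \<theta> i * K i) * (\<mu> * G)) powr (1 / qq)"
    using B G_pos qq(1) by (intro powr_mono2) (auto simp: \<mu>_def P_def prod_nonneg)
  also have "\<dots> = exp (\<Sum>i\<in>I. \<theta> i * K i) powr (1 / qq) * (\<mu> * G) powr (1 / qq)"
    by (rule powr_mult)
  also have "exp (\<Sum>i\<in>I. \<theta> i * K i) powr (1 / qq) = exp (\<Sum>i\<in>I. K i / q i)"
    using qq(1) by (simp add: exp_powr_real \<theta>_def sum_divide_distrib)
  finally show "(\<Prod>i\<in>I. Lnorm (q i) B (\<omega> i)) \<le> exp (\<Sum>i\<in>I. K i / q i) * Lnorm qq B (\<lambda>y. \<Prod>i\<in>I. \<omega> i y)"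
    unfolding norm_prod norm_u .
qed

lemma Lnorm_prod_bounds_on_balls:
  fixes \<omega> :: "'i \<Rightarrow> 'a::euclidean_space \<Rightarrow> real"
  assumes I: "finite I"
    and q: "\<And>i. i \<in> I \<Longrightarrow> 0 < q i" and qq: "0 < qq" "1 / qq = (\<Sum>i\<in>I. 1 / q i)"
    and \<omega>: "\<And>i. i \<in> I \<Longrightarrow> is_weight (\<omega> i)"
    and v: "\<And>i. i \<in> I \<Longrightarrow> is_weight (\<lambda>y. \<omega> i y powr q i)"
    and u: "is_weight (\<lambda>y. (\<Prod>i\<in>I. \<omega> i y) powr qq)"
    and K: "\<And>i. i \<in> I \<Longrightarrow> reverse_Jensen_on_balls (K i) (\<lambda>y. \<omega> i y powr q i)"
    and r: "0 < r"
  shows "Lnorm qq (ball x r) (\<lambda>y. \<Prod>i\<in>I. \<omega> i y) \<le> (\<Prod>i\<in>I. Lnorm (q i) (ball x r) (\<omega> i))"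
    and "(\<Prod>i\<in>I. Lnorm (q i) (ball x r) (\<omega> i))
           \<le> exp (\<Sum>i\<in>I. K i / q i) * Lnorm qq (ball x r) (\<lambda>y. \<Prod>i\<in>I. \<omega> i y)"
proof -
  have "AE y in lebesgue. \<forall>i\<in>I. 0 < \<omega> i y"
    using I \<omega> by (intro AE_finite_allI) (auto simp: is_weight_def)
  then have \<omega>_pos: "AE y\<in>ball x r in lebesgue. \<forall>i\<in>I. 0 < \<omega> i y"
    by (rule AE_mp) simp
  have B: "0 < measure lebesgue (ball x r)" using r by simp
  have \<omega>_nonneg: "0 \<le> \<omega> i y" if "i \<in> I" for i y
    using \<omega> that by (simp add: is_weight_def)
  have v_int: "set_integrable lebesgue (ball x r) (\<lambda>y. \<omega> i y powr q i)" if "i \<in> I" for i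
    using v that by (simp add: is_weight_def)
  have u_int: "set_integrable lebesgue (ball x r) (\<lambda>y. (\<Prod>i\<in>I. \<omega> i y) powr qq)"
    using u by (simp add: is_weight_def)
  have reverse: "set_integrable lebesgue (ball x r) (\<lambda>y. ln (\<omega> i y powr q i)) \<and>
      ln (avg (ball x r) (\<lambda>y. \<omega> i y powr q i))
        \<le> K i + avg (ball x r) (\<lambda>y. ln (\<omega> i y powr q i))" if "i \<in> I" for i
    using K that r by (simp add: reverse_Jensen_on_balls_def)
  show "Lnorm qq (ball x r) (\<lambda>y. \<Prod>i\<in>I. \<omega> i y) \<le> (\<Prod>i\<in>I. Lnorm (q i) (ball x r) (\<omega> i))"
    and "(\<Prod>i\<in>I. Lnorm (q i) (ball x r) (\<omega> i))
           \<le> exp (\<Sum>i\<in>I. K i / q i) * Lnorm qq (ball x r) (\<lambda>y. \<Prod>i\<in>I. \<omega> i y)"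
    using Lnorm_prod_bounds[OF B I q qq \<omega>_nonneg \<omega>_pos v_int u_int reverse] by blast+
qed

theorem lemma2p3:
  fixes m :: nat and q :: "nat \<Rightarrow> real" and qq :: real
    and \<omega> :: "nat \<Rightarrow> 'a::euclidean_space \<Rightarrow> real"
  assumes m: "1 \<le> m"
    and q_ge: "\<forall>i<m. 1 \<le> q i"
    and qq_pos: "0 < qq"
    and qq_def: "1 / qq = (\<Sum>i<m. 1 / q i)"
    and weights: "\<forall>i<m. is_weight (\<omega> i)"
    and Ainf_i: "\<forall>i<m. A_infty (\<lambda>y. \<omega> i y powr q i)"
    and Ainf_u: "A_infty (\<lambda>y. (\<Prod>i<m. \<omega> i y) powr qq)"
  shows "\<exists>C>0. \<forall>x r. 0 < r \<longrightarrow>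
           (1 / C) * Lnorm qq (ball x r) (\<lambda>y. \<Prod>i<m. \<omega> i y)
             \<le> (\<Prod>i<m. Lnorm (q i) (ball x r) (\<omega> i)) \<and>
           (\<Prod>i<m. Lnorm (q i) (ball x r) (\<omega> i))
             \<le> C * Lnorm qq (ball x r) (\<lambda>y. \<Prod>i<m. \<omega> i y)"
proof -
  have q: "0 < q i" if "i \<in> {..<m}" for i
    using q_ge that by (simp add: order_less_le_trans[OF zero_less_one])
  have \<omega>: "is_weight (\<omega> i)" and v: "is_weight (\<lambda>y. \<omega> i y powr q i)" if "i \<in> {..<m}" for i
    using weights Ainf_i that by (simp_all add: A_infty_imp_weight)
  have "\<forall>i\<in>{..<m}. \<exists>K. reverse_Jensen_on_balls K (\<lambda>y. \<omega> i y powr q i)"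
    using Ainf_i A_infty_reverse_Jensen by blast
  then obtain K
    where K: "\<And>i. i \<in> {..<m} \<Longrightarrow> reverse_Jensen_on_balls (K i) (\<lambda>y. \<omega> i y powr q i)"
    by metis
  define C where "C = max 1 (exp (\<Sum>i<m. K i / q i))"
  show ?thesis
  proof (intro exI[of _ C] conjI allI impI)
    show "0 < C" by (simp add: C_def)
    fix x :: 'a and r :: real
    assume r: "0 < r"
    define Lu where "Lu = Lnorm qq (ball x r) (\<lambda>y. \<Prod>i<m. \<omega> i y)"
    have bounds: "Lu \<le> (\<Prod>i<m. Lnorm (q i) (ball x r) (\<omega> i))"
      "(\<Prod>i<m. Lnorm (q i) (ball x r) (\<omega> i)) \<le> exp (\<Sum>i<m. K i / q i) * Lu"
      unfolding Lu_def
      using Lnorm_prod_bounds_on_balls[OF finite_lessThan q qq_pos qq_def \<omega> v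
          A_infty_imp_weight[OF Ainf_u] K r]
      by simp_all
    have "0 \<le> Lu" by (simp add: Lu_def Lnorm_def)
    then have "1 / C * Lu \<le> 1 * Lu" and "exp (\<Sum>i<m. K i / q i) * Lu \<le> C * Lu"
      by (intro mult_right_mono; simp add: C_def)+
    with bounds show "1 / C * Lu \<le> (\<Prod>i<m. Lnorm (q i) (ball x r) (\<omega> i))"
      and "(\<Prod>i<m. Lnorm (q i) (ball x r) (\<omega> i)) \<le> C * Lu"
      by linarith+
  qed
qed

end
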